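(* Let $X,Y$ be metric spaces, $U\subset X$, $V\subset Y$ open sets, and $F:X\rightrightarrows Y$ a set-valued mapping whose graph is complete in the product metric. Let $r>0$ and suppose there is $\xi>0$ such that for every $x\in U$, $y\in V$, $v\in F(x)$ with $0<d(y,v)<r\,m(x)$ there is $(u,w)\in\operatorname{gr}F$, $(u,w)\ne(x,v)$, with $$d(y,w)\le d(y,v)-r\,d_\xi\big((x,v),(u,w)\big).$$ Then $F$ is Milyutin regular on $U\times V$ and $\operatorname{sur}_m F(U|V)\ge r$. Conversely, if $F$ is Milyutin regular on $U\times V$, then for every $r$ with $0<r<\operatorname{sur}_mF(U|V)$, every $\xi\in(0,r^{-1})$ and every $x\in U$, $v\in F(x)$, $y\in V$ with $0<d(y,v)<r\,m(x)$, there is $(u,w)\in\operatorname{gr}F$, $(u,w)\neq(x,v)$, satisfying the displayed inequality.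
   Context: $m(x)=d(x,X\setminus U)$ (with $d(x,\emptyset)=+\infty$). $d_\xi((x,v),(x',v'))=\max\{d(x,x'),\xi d(v,v')\}$. $B(A,s)=\{y:\exists a\in A,\ d(y,a)\le s\}$, $B(x,t)$ the closed ball. $F$ is Milyutin regular on $U\times V$ if there is $r>0$ with $B(F(x),rt)\cap V\subset F(B(x,t))$ for all $x\in U$, $0\le t<m(x)$; $\operatorname{sur}_mF(U|V)$ is the supremum of such $r$ ($0$ if none). *)

theory Defs
  imports "HOL-Analysis.Analysis" "HOL-Library.Extended_Real"
begin

definition mdist :: "'a::metric_space set \<Rightarrow> 'a \<Rightarrow> ereal" where
  "mdist U x = (if U = UNIV then \<infinity> else ereal (infdist x (- U)))"

definition dxi :: "real \<Rightarrow> ('a::metric_space \<times> 'b::metric_space) \<Rightarrow> ('a \<times> 'b) \<Rightarrow> real" where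
  "dxi \<xi> p q = max (dist (fst p) (fst q)) (\<xi> * dist (snd p) (snd q))"

definition enl :: "'a::metric_space set \<Rightarrow> real \<Rightarrow> 'a set" where
  "enl A s = {y. \<exists>a\<in>A. dist y a \<le> s}"

definition graph :: "('a \<Rightarrow> 'b set) \<Rightarrow> ('a \<times> 'b) set" where
  "graph F = {(x, y). y \<in> F x}"

definition milyutin_rate ::
  "('a::metric_space \<Rightarrow> 'b::metric_space set) \<Rightarrow> 'a set \<Rightarrow> 'b set \<Rightarrow> real \<Rightarrow> bool" where
  "milyutin_rate F U V r \<longleftrightarrow> r > 0 \<and>
     (\<forall>x\<in>U. \<forall>t. 0 \<le> t \<and> ereal t < mdist U x \<longrightarrow>
        enl (F x) (r * t) \<inter> V \<subseteq> \<Union> (F ` cball x t))"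

definition milyutin_regular ::
  "('a::metric_space \<Rightarrow> 'b::metric_space set) \<Rightarrow> 'a set \<Rightarrow> 'b set \<Rightarrow> bool" where
  "milyutin_regular F U V \<longleftrightarrow> (\<exists>r. milyutin_rate F U V r)"

definition sur_m ::
  "('a::metric_space \<Rightarrow> 'b::metric_space set) \<Rightarrow> 'a set \<Rightarrow> 'b set \<Rightarrow> ereal" where
  "sur_m F U V = (if milyutin_regular F U V
                  then Sup {ereal r | r. milyutin_rate F U V r} else 0)"

end

theory Submission
  imports Defs
begin

text \<open>
  Sufficiency is Ekeland's variational principle applied on the complete graph of \<open>F\<close> to
  \<open>(u, w) \<mapsto> d(y, w)\<close>, perturbed by \<open>r d\<^sub>\<xi>\<close>: the Ekeland point starting from \<open>(x, v)\<close> moves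
  the first coordinate by at most \<open>d(y, v) / r\<close>, hence stays in the region where the descent
  condition applies, and a further strict descent is impossible there, so the Ekeland point
  has second coordinate \<open>y\<close>. As \<open>d\<^sub>\<xi>\<close> is not the product metric of the graph, Ekeland's principle
  is proved for a function \<open>D\<close> with \<open>D(p, p) = 0\<close> and the triangle inequality that dominates the
  metric up to a constant. Necessity is direct: a rate \<open>r' > r\<close> yields \<open>u\<close> with \<open>y \<in> F(u)\<close>
  and \<open>d(x, u) \<le> d(y, v) / r'\<close>, and \<open>\<xi> r < 1\<close> controls the second coordinate of \<open>r d\<^sub>\<xi>\<close>.
\<close>

lemma Cauchy_if_tail_dist_le:
  fixes s :: "nat \<Rightarrow> 'a::metric_space"
  assumes tail: "\<And>n m. n \<le> m \<Longrightarrow> dist (s n) (s m) \<le> b n" and b: "b \<longlonglongrightarrow> 0"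
  shows "Cauchy s"
  unfolding Cauchy_altdef2
proof (intro allI impI)
  fix e :: real assume "e > 0"
  then obtain N where "b N < e"
    using order_tendstoD(2)[OF b] by (meson eventually_sequentially order_refl)
  then show "\<exists>N. \<forall>n\<ge>N. dist (s n) (s N) < e"
    using tail by (metis dist_commute order.strict_trans1)
qed

locale ekeland =
  fixes S :: "'a::metric_space set" and f :: "'a \<Rightarrow> real" and D :: "'a \<Rightarrow> 'a \<Rightarrow> real"
    and r C :: real
  assumes complete: "complete S"
    and bdd_below_f: "bdd_below (f ` S)"
    and continuous_f: "continuous_on S f"
    and continuous_D: "\<And>p. p \<in> S \<Longrightarrow> continuous_on S (D p)"
    and D_self: "\<And>p. p \<in> S \<Longrightarrow> D p p = 0"
    and D_triangle: "\<And>p q m. \<lbrakk>p \<in> S; q \<in> S; m \<in> S\<rbrakk> \<Longrightarrow> D p q \<le> D p m + D m q"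
    and dist_le_D: "\<And>p q. \<lbrakk>p \<in> S; q \<in> S\<rbrakk> \<Longrightarrow> dist p q \<le> C * D p q"
    and r_pos: "0 < r" and C_pos: "0 < C"
begin

definition descent :: "'a \<Rightarrow> 'a set" where
  "descent p = {q \<in> S. f q + r * D p q \<le> f p}"

lemma descent_subset: "descent p \<subseteq> S"
  by (auto simp: descent_def)

lemma descent_self: "p \<in> S \<Longrightarrow> p \<in> descent p"
  by (simp add: descent_def D_self)

lemma descent_trans:
  assumes "p \<in> S" "m \<in> descent p" "q \<in> descent m"
  shows "q \<in> descent p"
proof -
  have "r * D p q \<le> r * D p m + r * D m q"
    using assms D_triangle[of p q m] r_pos by (simp add: descent_def flip: distrib_left)
  then show ?thesis
    using assms by (auto simp: descent_def)
qed

lemma limit_in_descent: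
  assumes p: "p \<in> S" and lim: "s \<longlonglongrightarrow> l" and "l \<in> S"
    and ev: "eventually (\<lambda>n. s n \<in> descent p) sequentially"
  shows "l \<in> descent p"
proof -
  have ev_S: "eventually (\<lambda>n. s n \<in> S) sequentially"
    by (rule eventually_mono[OF ev]) (use descent_subset in blast)
  have "(\<lambda>n. f (s n) + r * D p (s n)) \<longlonglongrightarrow> f l + r * D p l"
    using continuous_on_tendsto_compose[OF continuous_f lim \<open>l \<in> S\<close> ev_S]
      continuous_on_tendsto_compose[OF continuous_D[OF p] lim \<open>l \<in> S\<close> ev_S]
    by (intro tendsto_intros) (simp_all add: comp_def)
  moreover have "eventually (\<lambda>n. f (s n) + r * D p (s n) \<le> f p) sequentially"
    using ev by (auto simp: descent_def elim: eventually_mono)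
  ultimately have "f l + r * D p l \<le> f p"
    by (rule tendsto_upperbound) simp
  with \<open>l \<in> S\<close> show ?thesis
    by (simp add: descent_def)
qed

lemma approximate_minimizer_exists:
  assumes "p \<in> S" "0 < e"
  shows "\<exists>q\<in>descent p. \<forall>q'\<in>descent p. f q \<le> f q' + e"
proof -
  have ne: "f ` descent p \<noteq> {}"
    using descent_self[OF \<open>p \<in> S\<close>] by blast
  have bdd: "bdd_below (f ` descent p)"
    using bdd_below_f descent_subset by (meson bdd_below_mono image_mono)
  obtain q where q: "q \<in> descent p" "f q < Inf (f ` descent p) + e"
    using cInf_lessD[OF ne, of "Inf (f ` descent p) + e"] \<open>0 < e\<close> by auto
  have "f q \<le> f q' + e" if "q' \<in> descent p" for q'
    using cInf_lower[OF imageI[OF that] bdd] q(2) by linarith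
  with q(1) show ?thesis
    by blast
qed

lemma descent_of_approximate_minimizer_small:
  assumes "p \<in> S" "q \<in> descent p" "\<forall>q'\<in>descent p. f q \<le> f q' + e" "q' \<in> descent q"
  shows "dist q q' \<le> C * e / r"
proof -
  have "f q \<le> f q' + e"
    using assms descent_trans by blast
  moreover have "f q' + r * D q q' \<le> f q"
    using assms(4) by (simp add: descent_def)
  ultimately have "D q q' \<le> e / r"
    using r_pos by (simp add: field_simps)
  then have "C * D q q' \<le> C * e / r"
    using C_pos by (metis less_le mult_left_mono times_divide_eq_right)
  moreover have "q \<in> S" "q' \<in> S"
    using assms(2,4) descent_subset by auto
  ultimately show ?thesis
    using dist_le_D by (meson order_trans)
qed

lemma descent_sequence_exists:
  assumes "p \<in> S" "\<And>n. 0 < e n"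
  shows "\<exists>s. \<forall>n. s n \<in> descent p \<and> (\<forall>q\<in>descent (s n). dist (s n) q \<le> C * e n / r)
                 \<and> s (Suc n) \<in> descent (s n)"
proof -
  define P where "P n q \<longleftrightarrow> q \<in> descent p \<and> (\<forall>q'\<in>descent q. dist q q' \<le> C * e n / r)"
    for n q
  have "\<exists>s. \<forall>n. P n (s n) \<and> s (Suc n) \<in> descent (s n)"
  proof (rule dependent_nat_choice)
    show "\<exists>q. P 0 q"
      using approximate_minimizer_exists[OF assms(1,2)] descent_of_approximate_minimizer_small[OF assms(1)]
      unfolding P_def by blast
  next
    fix q n
    assume q: "P n q"
    then have "q \<in> S"
      using descent_subset by (auto simp: P_def)
    then obtain q1 where "q1 \<in> descent q" "\<forall>q'\<in>descent q. f q1 \<le> f q' + e (Suc n)"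
      using approximate_minimizer_exists assms(2) by blast
    then show "\<exists>q1. P (Suc n) q1 \<and> q1 \<in> descent q"
      using q descent_trans[OF assms(1)] descent_of_approximate_minimizer_small[OF \<open>q \<in> S\<close>]
      unfolding P_def by blast
  qed
  then show ?thesis
    by (simp add: P_def)
qed

theorem ekeland_variational_principle:
  assumes "p0 \<in> S"
  shows "\<exists>p\<in>S. f p + r * D p0 p \<le> f p0 \<and> (\<forall>q\<in>S. q \<noteq> p \<longrightarrow> f p < f q + r * D p q)"
proof -
  define b where "b n = C * inverse (real (Suc n)) / r" for n
  have b: "b \<longlonglongrightarrow> 0"
    unfolding b_def by (intro tendsto_divide_zero tendsto_mult_right_zero LIMSEQ_inverse_real_of_nat)
  obtain s where s_in: "\<And>n. s n \<in> descent p0"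
    and small: "\<And>n q. q \<in> descent (s n) \<Longrightarrow> dist (s n) q \<le> b n"
    and s_step: "\<And>n. s (Suc n) \<in> descent (s n)"
    using descent_sequence_exists[OF assms, of "\<lambda>n. inverse (real (Suc n))"] unfolding b_def by auto
  have s_S: "s n \<in> S" for n
    using s_in descent_subset by blast
  have nested: "s m \<in> descent (s n)" if "n \<le> m" for n m
    using that
  proof (induction m rule: dec_induct)
    case base show ?case by (rule descent_self[OF s_S])
  next
    case (step m) then show ?case using descent_trans[OF s_S] s_step by blast
  qed
  have "Cauchy s"
    using Cauchy_if_tail_dist_le[OF small[OF nested] b] .
  then obtain l where "l \<in> S" and lim: "s \<longlonglongrightarrow> l"
    using complete s_S by (meson completeE)
  have l_in: "l \<in> descent (s n)" for n
    by (rule limit_in_descent[OF s_S lim \<open>l \<in> S\<close>])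
      (auto simp: eventually_sequentially intro: nested)
  have descent_l: "descent l = {l}"
  proof (intro equalityI subsetI)
    fix q assume "q \<in> descent l"
    then have "q \<in> descent (s n)" for n
      using descent_trans[OF s_S l_in] by blast
    then have "(\<lambda>n. dist (s n) q) \<longlonglongrightarrow> 0"
      by (intro Lim_null_comparison[OF _ b] always_eventually allI) (simp add: small)
    then have "s \<longlonglongrightarrow> q"
      by (simp flip: tendsto_dist_iff)
    then show "q \<in> {l}"
      using lim LIMSEQ_unique by auto
  qed (simp add: descent_self \<open>l \<in> S\<close>)
  show ?thesis
  proof (intro bexI conjI ballI impI)
    have "l \<in> descent p0"
      using descent_trans[OF assms s_in[of 0] l_in[of 0]] .
    then show "f l + r * D p0 l \<le> f p0"
      by (simp add: descent_def)
    fix q assume "q \<in> S" "q \<noteq> l"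
    then have "q \<notin> descent l"
      using descent_l by blast
    with \<open>q \<in> S\<close> show "f l < f q + r * D l q"
      by (simp add: descent_def not_le)
  qed (rule \<open>l \<in> S\<close>)
qed

end

lemma dxi_self: "dxi \<xi> p p = 0"
  by (simp add: dxi_def)

lemma dist_fst_le_dxi: "dist (fst p) (fst q) \<le> dxi \<xi> p q"
  by (simp add: dxi_def)

lemma dxi_triangle:
  assumes "0 \<le> \<xi>"
  shows "dxi \<xi> p q \<le> dxi \<xi> p m + dxi \<xi> m q"
proof -
  have "dist (fst p) (fst q) \<le> dist (fst p) (fst m) + dist (fst m) (fst q)"
    by (rule dist_triangle)
  moreover have "\<xi> * dist (snd p) (snd q) \<le> \<xi> * dist (snd p) (snd m) + \<xi> * dist (snd m) (snd q)"
    using mult_left_mono[OF dist_triangle[of "snd p" "snd q" "snd m"] assms]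
    by (simp add: distrib_left)
  ultimately show ?thesis
    unfolding dxi_def by linarith
qed

lemma dist_le_dxi:
  assumes "0 < \<xi>"
  shows "dist p q \<le> (1 + 1 / \<xi>) * dxi \<xi> p q"
proof -
  have "dist p q \<le> dist (fst p) (fst q) + dist (snd p) (snd q)"
    using sqrt_sum_squares_le_sum_abs[of "dist (fst p) (fst q)" "dist (snd p) (snd q)"]
    by (simp add: dist_prod_def)
  moreover have "dist (fst p) (fst q) \<le> dxi \<xi> p q"
    by (rule dist_fst_le_dxi)
  moreover have "dist (snd p) (snd q) \<le> dxi \<xi> p q / \<xi>"
    using assms by (simp add: dxi_def field_simps)
  ultimately show ?thesis
    by (simp add: algebra_simps)
qed

lemma continuous_on_dxi: "continuous_on A (dxi \<xi> p)"
  unfolding dxi_def by (intro continuous_intros)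

lemma ereal_less_mult_mdist_iff:
  assumes "0 < r"
  shows "ereal a < ereal r * mdist U x \<longleftrightarrow> ereal (a / r) < mdist U x"
  using assms by (simp add: mdist_def pos_divide_less_eq mult.commute)

lemma less_mdist_shift:
  assumes "ereal t < mdist U x" "a + dist x u \<le> t" "0 \<le> a"
  shows "u \<in> U \<and> ereal a < mdist U u"
proof (cases "U = UNIV")
  case False
  then have "t < infdist x (- U)"
    using assms(1) by (simp add: mdist_def)
  then have "a < infdist u (- U)"
    using infdist_triangle[of x "- U" u] assms(2) by linarith
  then show ?thesis
    using False assms(3) by (auto simp: mdist_def)
qed (simp add: mdist_def)

definition descent_condition ::
  "('a::metric_space \<Rightarrow> 'b::metric_space set) \<Rightarrow> 'a set \<Rightarrow> 'b set \<Rightarrow> real \<Rightarrow> real \<Rightarrow> bool" where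
  "descent_condition F U V r \<xi> \<longleftrightarrow>
     (\<forall>x\<in>U. \<forall>y\<in>V. \<forall>v\<in>F x.
        0 < dist y v \<and> ereal (dist y v) < ereal r * mdist U x \<longrightarrow>
        (\<exists>u w. w \<in> F u \<and> (u, w) \<noteq> (x, v) \<and> dist y w \<le> dist y v - r * dxi \<xi> (x, v) (u, w)))"

lemma mem_graph_iff [simp]: "(x, y) \<in> graph F \<longleftrightarrow> y \<in> F x"
  by (simp add: graph_def)

lemma preimage_close_if_descent_condition:
  fixes F :: "'a::metric_space \<Rightarrow> 'b::metric_space set"
  assumes complete: "complete (graph F)" and "0 < r" "0 < \<xi>"
    and descent: "descent_condition F U V r \<xi>"
    and "x \<in> U" "v \<in> F x" "y \<in> V" and near: "ereal (dist y v / r) < mdist U x"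
  shows "\<exists>u. y \<in> F u \<and> r * dist x u \<le> dist y v"
proof -
  interpret ekeland "graph F" "\<lambda>p. dist y (snd p)" "dxi \<xi>" r "1 + 1 / \<xi>"
    using assms(1-3) dxi_self dxi_triangle[OF less_imp_le[OF \<open>0 < \<xi>\<close>]]
      dist_le_dxi[OF \<open>0 < \<xi>\<close>] continuous_on_dxi
    by unfold_locales (auto intro!: continuous_intros bdd_belowI[of _ 0] add_pos_pos)
  obtain u w where "w \<in> F u" and close: "dist y w + r * dxi \<xi> (x, v) (u, w) \<le> dist y v"
    and minimal: "\<And>u' w'. w' \<in> F u' \<Longrightarrow> (u', w') \<noteq> (u, w) \<Longrightarrow>
                    dist y w < dist y w' + r * dxi \<xi> (u, w) (u', w')"
    using ekeland_variational_principle[of "(x, v)"] \<open>v \<in> F x\<close> by (auto simp: Ball_def)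
  have "r * dist x u \<le> r * dxi \<xi> (x, v) (u, w)"
    using dist_fst_le_dxi[of "(x, v)" "(u, w)" \<xi>] \<open>0 < r\<close> by simp
  with close have moved: "dist y w + r * dist x u \<le> dist y v"
    by linarith
  have "dist y w / r + dist x u \<le> dist y v / r"
    using divide_right_mono[OF moved, of r] \<open>0 < r\<close> by (simp add: add_divide_distrib)
  then have "u \<in> U \<and> ereal (dist y w / r) < mdist U u"
    using less_mdist_shift[OF near] \<open>0 < r\<close> by simp
  then have "ereal (dist y w) < ereal r * mdist U u" "u \<in> U"
    using ereal_less_mult_mdist_iff[OF \<open>0 < r\<close>] by auto
  have "w = y"
  proof (rule ccontr)
    assume "w \<noteq> y"
    then have "0 < dist y w"
      by simp
    then obtain u' w' where other: "w' \<in> F u'" "(u', w') \<noteq> (u, w)"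
      and further: "dist y w' \<le> dist y w - r * dxi \<xi> (u, w) (u', w')"
      using descent \<open>u \<in> U\<close> \<open>y \<in> V\<close> \<open>w \<in> F u\<close> \<open>ereal (dist y w) < ereal r * mdist U u\<close>
      unfolding descent_condition_def by blast
    have "dist y w < dist y w' + r * dxi \<xi> (u, w) (u', w')"
      using minimal[OF other] .
    with further show False
      by linarith
  qed
  moreover have "r * dist x u \<le> dist y v"
    using moved zero_le_dist[of y w] by linarith
  ultimately show ?thesis
    using \<open>w \<in> F u\<close> by (intro exI[of _ u]) simp
qed

lemma milyutin_rate_if_descent_condition:
  assumes "complete (graph F)" "0 < r" "0 < \<xi>" "descent_condition F U V r \<xi>"
  shows "milyutin_rate F U V r"
  unfolding milyutin_rate_def
proof (intro conjI \<open>0 < r\<close> ballI allI impI subsetI)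
  fix x t y
  assume "x \<in> U" and t: "0 \<le> t \<and> ereal t < mdist U x" and "y \<in> enl (F x) (r * t) \<inter> V"
  then obtain v where "v \<in> F x" "dist y v \<le> r * t" "y \<in> V"
    by (auto simp: enl_def)
  then have "dist y v / r \<le> t"
    using \<open>0 < r\<close> by (simp add: field_simps)
  then have "ereal (dist y v / r) < mdist U x"
    using t by (meson ereal_less_eq(3) order.strict_trans1)
  then obtain u where "y \<in> F u" "r * dist x u \<le> dist y v"
    using preimage_close_if_descent_condition[OF assms(1-4)] \<open>x \<in> U\<close> \<open>v \<in> F x\<close> \<open>y \<in> V\<close> by blast
  then have "dist x u \<le> t"
    using \<open>dist y v \<le> r * t\<close> \<open>0 < r\<close> by (meson mult_le_cancel_left_pos order_trans)
  with \<open>y \<in> F u\<close> show "y \<in> \<Union> (F ` cball x t)"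
    by auto
qed

lemma descent_condition_if_milyutin_rate:
  assumes rate: "milyutin_rate F U V r'" and "0 < r" "r < r'" "0 < \<xi>" "\<xi> < 1 / r"
  shows "descent_condition F U V r \<xi>"
  unfolding descent_condition_def
proof (intro ballI impI)
  fix x y v
  assume "x \<in> U" "y \<in> V" "v \<in> F x" and dist_yv: "0 < dist y v \<and> ereal (dist y v) < ereal r * mdist U x"
  define t where "t = dist y v / r'"
  have "0 \<le> t" "r' * t = dist y v" "t \<le> dist y v / r"
    using \<open>0 < r\<close> \<open>r < r'\<close> by (simp_all add: t_def frac_le)
  moreover have "ereal (dist y v / r) < mdist U x"
    using dist_yv ereal_less_mult_mdist_iff[OF \<open>0 < r\<close>] by blast
  ultimately have "ereal t < mdist U x"
    by (meson ereal_less_eq(3) order.strict_trans1)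
  with rate \<open>x \<in> U\<close> \<open>0 \<le> t\<close> have "enl (F x) (r' * t) \<inter> V \<subseteq> \<Union> (F ` cball x t)"
    unfolding milyutin_rate_def by blast
  moreover have "y \<in> enl (F x) (r' * t) \<inter> V"
    unfolding \<open>r' * t = dist y v\<close> using \<open>v \<in> F x\<close> \<open>y \<in> V\<close> by (auto simp: enl_def)
  ultimately obtain u where "y \<in> F u" "dist x u \<le> t"
    by auto
  have "r * dist x u \<le> dist y v"
    using mult_left_mono[OF \<open>dist x u \<le> t\<close>] \<open>t \<le> dist y v / r\<close> \<open>0 < r\<close>
    by (smt (verit) pos_le_divide_eq mult.commute)
  moreover have "r * (\<xi> * dist v y) \<le> dist y v"
    using \<open>\<xi> < 1 / r\<close> \<open>0 < r\<close> mult_right_mono[of "r * \<xi>" 1 "dist v y"]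
    by (simp add: field_simps dist_commute)
  ultimately have "r * dxi \<xi> (x, v) (u, y) \<le> dist y v"
    by (simp add: dxi_def flip: max_mult_distrib_left)
  with \<open>y \<in> F u\<close> dist_yv show "\<exists>u w. w \<in> F u \<and> (u, w) \<noteq> (x, v) \<and>
                       dist y w \<le> dist y v - r * dxi \<xi> (x, v) (u, w)"
    by (intro exI[of _ u] exI[of _ y]) auto
qed

lemma sur_m_ge_if_milyutin_rate: "milyutin_rate F U V r \<Longrightarrow> ereal r \<le> sur_m F U V"
  by (auto simp: sur_m_def milyutin_regular_def intro!: Sup_upper)

lemma milyutin_rate_above_if_less_sur_m:
  assumes "0 < r" "ereal r < sur_m F U V"
  obtains r' where "milyutin_rate F U V r'" "r < r'"
  using assms by (auto simp: sur_m_def less_Sup_iff split: if_splits)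

theorem mainTheorem2:
  fixes F :: "'a::metric_space \<Rightarrow> 'b::metric_space set"
    and U :: "'a set" and V :: "'b set"
  assumes "open U" and "open V" and "complete (graph F)"
  shows "(\<forall>r \<xi>. r > 0 \<and> \<xi> > 0 \<and>
            (\<forall>x\<in>U. \<forall>y\<in>V. \<forall>v\<in>F x.
               0 < dist y v \<and> ereal (dist y v) < ereal r * mdist U x \<longrightarrow>
               (\<exists>u w. w \<in> F u \<and> (u, w) \<noteq> (x, v) \<and>
                  dist y w \<le> dist y v - r * dxi \<xi> (x, v) (u, w)))
          \<longrightarrow> milyutin_regular F U V \<and> sur_m F U V \<ge> ereal r)
       \<and>
       (milyutin_regular F U V \<longrightarrow>
          (\<forall>r \<xi>. 0 < r \<and> ereal r < sur_m F U V \<and> 0 < \<xi> \<and> \<xi> < 1 / r \<longrightarrow>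
            (\<forall>x\<in>U. \<forall>v\<in>F x. \<forall>y\<in>V.
               0 < dist y v \<and> ereal (dist y v) < ereal r * mdist U x \<longrightarrow>
               (\<exists>u w. w \<in> F u \<and> (u, w) \<noteq> (x, v) \<and>
                  dist y w \<le> dist y v - r * dxi \<xi> (x, v) (u, w)))))"
  unfolding descent_condition_def[symmetric]
proof (intro conjI impI allI)
  fix r \<xi> :: real
  assume "0 < r \<and> 0 < \<xi> \<and> descent_condition F U V r \<xi>"
  then have "milyutin_rate F U V r"
    using milyutin_rate_if_descent_condition[OF \<open>complete (graph F)\<close>] by blast
  then show "milyutin_regular F U V" "ereal r \<le> sur_m F U V"
    using sur_m_ge_if_milyutin_rate milyutin_regular_def by blast+
next
  fix r \<xi> :: real
  assume "0 < r \<and> ereal r < sur_m F U V \<and> 0 < \<xi> \<and> \<xi> < 1 / r"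
  then obtain r' where "milyutin_rate F U V r'" "r < r'"
    using milyutin_rate_above_if_less_sur_m by blast
  with \<open>0 < r \<and> _\<close> have "descent_condition F U V r \<xi>"
    using descent_condition_if_milyutin_rate by blast
  then show "\<forall>x\<in>U. \<forall>v\<in>F x. \<forall>y\<in>V. 0 < dist y v \<and> ereal (dist y v) < ereal r * mdist U x \<longrightarrow>
               (\<exists>u w. w \<in> F u \<and> (u, w) \<noteq> (x, v) \<and> dist y w \<le> dist y v - r * dxi \<xi> (x, v) (u, w))"
    unfolding descent_condition_def by blast
qed

end
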